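(* Let $d\in\ell^\infty(\mathbb{Z})$ be a limit-periodic potential that has an infinite frequency integer set $S_d$. Let $\tilde d\in\ell^\infty(\mathbb{Z})$ be a limit-periodic potential with a frequency integer set $S_{\tilde d}$. If $S_{\tilde d}$ is an infinite subset of $S_d$, then $\Omega_d\cong\Omega_{\tilde d}$ as topological groups.
   Context: $\ell^\infty(\mathbb{Z})$ carries the sup norm; $\sigma$ is the left shift, $(\sigma d)_n=d_{n+1}$. For $d\in\ell^\infty(\mathbb{Z})$, $\mathrm{orb}(d)=\{\sigma^k d: k\in\mathbb{Z}\}$ and $\Omega_d=\mathrm{hull}(d)$ is the closure of $\mathrm{orb}(d)$ in $\ell^\infty(\mathbb{Z})$. A potential $p$ is periodic if $\mathrm{orb}(p)$ is finite; $d$ is limit-periodic if it lies in the $\ell^\infty$-closure of the set of periodic potentials. For limit-periodic $d$, $\Omega_d$ is compact and carries a unique topological group structure (which is abelian) with identity $d$ such that $k\mapsto\sigma^k(d)$ is a group homomorphism $\mathbb{Z}\to\Omega_d$; isomorphisms of hulls refer to this structure. The frequency module $F_d\subset\mathbb{R}$ is the set of $\alpha\in\mathbb{R}$ such that $\sigma^k(d)\mapsto e^{ik\alpha}$ extends to a continuous character of $\Omega_d$ (equivalently, the $\mathbb{Z}$-module generated by those $\alpha$ with $\lim_{n\to\infty}\frac1{2n}\sum_{k=-n}^n d(k)e^{-ik\alpha}\neq0$). A frequency integer set of $d$ is a set $S=\{n_j\}$ of positive integers with $n_j\mid n_{j+1}$ for all $j$ such that $F_d$ is the $\mathbb{Z}$-module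 generated by $\{2\pi/n_j: n_j\in S\}$. *)

theory Defs
  imports "HOL-Analysis.Analysis"
begin

text \<open>Potentials: elements of l-infinity(Z), modelled as bounded (automatically continuous,
  Z being discrete) functions Z -> R; the metric of this type is the sup distance.\<close>
type_synonym pot = "int \<Rightarrow>\<^sub>C real"

definition shiftk :: "int \<Rightarrow> pot \<Rightarrow> pot" where
  "shiftk k d = Bcontfun (\<lambda>n. apply_bcontfun d (n + k))"

definition orb :: "pot \<Rightarrow> pot set" where
  "orb d = range (\<lambda>k. shiftk k d)"

definition pot_hull :: "pot \<Rightarrow> pot set" where
  "pot_hull d = closure (orb d)"

definition periodic_pot :: "pot \<Rightarrow> bool" where
  "periodic_pot p \<longleftrightarrow> finite (orb p)"

definition limit_periodic :: "pot \<Rightarrow> bool" where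
  "limit_periodic d \<longleftrightarrow> d \<in> closure {p. periodic_pot p}"

definition hull_group_op :: "pot \<Rightarrow> (pot \<Rightarrow> pot \<Rightarrow> pot) \<Rightarrow> bool" where
  "hull_group_op d m \<longleftrightarrow>
     (\<forall>x\<in>pot_hull d. \<forall>y\<in>pot_hull d. m x y \<in> pot_hull d) \<and>
     (\<forall>x\<in>pot_hull d. \<forall>y\<in>pot_hull d. \<forall>z\<in>pot_hull d. m (m x y) z = m x (m y z)) \<and>
     (\<forall>x\<in>pot_hull d. m d x = x \<and> m x d = x) \<and>
     (\<exists>inv. (\<forall>x\<in>pot_hull d. inv x \<in> pot_hull d \<and> m x (inv x) = d \<and> m (inv x) x = d) \<and>
            continuous_on (pot_hull d) inv) \<and>
     continuous_on (pot_hull d \<times> pot_hull d) (\<lambda>(x, y). m x y) \<and>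
     (\<forall>k l. m (shiftk k d) (shiftk l d) = shiftk (k + l) d)"

text \<open>The (unique) group operation on the hull of a limit-periodic potential.\<close>
definition hull_mult :: "pot \<Rightarrow> pot \<Rightarrow> pot \<Rightarrow> pot" where
  "hull_mult d = (SOME m. hull_group_op d m)"

definition hulls_isomorphic :: "pot \<Rightarrow> pot \<Rightarrow> bool" where
  "hulls_isomorphic d e \<longleftrightarrow>
     (\<exists>\<phi> \<psi>. homeomorphism (pot_hull d) (pot_hull e) \<phi> \<psi> \<and>
        (\<forall>x\<in>pot_hull d. \<forall>y\<in>pot_hull d. \<phi> (hull_mult d x y) = hull_mult e (\<phi> x) (\<phi> y)))"

definition freq_module :: "pot \<Rightarrow> real set" where
  "freq_module d = {\<alpha>. \<exists>chr::pot \<Rightarrow> complex.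
      continuous_on (pot_hull d) chr \<and>
      (\<forall>x\<in>pot_hull d. norm (chr x) = 1) \<and>
      (\<forall>x\<in>pot_hull d. \<forall>y\<in>pot_hull d. chr (hull_mult d x y) = chr x * chr y) \<and>
      (\<forall>k::int. chr (shiftk k d) = cis (of_int k * \<alpha>))}"

definition int_span :: "real set \<Rightarrow> real set" where
  "int_span A = {x. \<exists>F c. finite F \<and> F \<subseteq> A \<and> x = (\<Sum>a\<in>F. of_int (c a) * a)}"

definition freq_integer_set :: "pot \<Rightarrow> nat set \<Rightarrow> bool" where
  "freq_integer_set d S \<longleftrightarrow>
     (\<exists>n :: nat \<Rightarrow> nat. S = range n \<and> (\<forall>j. 0 < n j \<and> n j dvd n (Suc j))) \<and>
     freq_module d = int_span ((\<lambda>n. 2 * pi / real n) ` S)"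

end

theory Submission
  imports Defs "HOL-Library.Real_Mod" "HOL-Computational_Algebra.Group_Closure"
begin

text \<open>
  The orbit map \<open>k \<mapsto> \<sigma>\<^sup>k d\<close> satisfies \<open>dist (\<sigma>\<^sup>k d) (\<sigma>\<^sup>l d) = dist (\<sigma>\<^sup>k\<^sup>-\<^sup>l d) d\<close>, so the hull is the
  completion of \<open>\<int>\<close> for a translation-invariant uniformity; its group law, its characters and
  isomorphisms between hulls all arise by extending maps that are uniformly continuous on the
  orbit. For limit-periodic \<open>d\<close> this uniformity is generated by the subgroups \<open>m\<int>\<close> with
  \<open>2\<pi>/m \<in> F\<^sub>d\<close>: a frequency \<open>2\<pi>/m\<close> forces all shifts close to \<open>d\<close> to be multiples of \<open>m\<close>, and
  conversely. When \<open>S\<^sub>d\<^sub>t\<close> is an infinite part of the divisor chain \<open>S\<^sub>d\<close>, each element of either set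
  divides an element of the other, so the identity map of the orbits is uniformly continuous in
  both directions and extends to an isomorphism of the hulls.
\<close>

text \<open>
  Completeness of \<open>pot\<close> is only available for bounded continuous functions on a metric
  space, so \<open>int\<close> gets its usual metric, which induces the discrete topology it already has.
\<close>

instantiation int :: uniformity_dist
begin
definition dist_int :: "int \<Rightarrow> int \<Rightarrow> real" where
  "dist_int x y = \<bar>real_of_int x - real_of_int y\<bar>"
definition uniformity_int :: "(int \<times> int) filter" where
  "uniformity_int = (INF e\<in>{0<..}. principal {(x, y). dist x y < e})"
instance
  by standard (simp add: uniformity_int_def)
end

lemma int_eq_if_dist_lt_1: "\<bar>real_of_int x - real_of_int y\<bar> < 1 \<Longrightarrow> x = y"
  by linarith

instance int :: metric_space
proof
  show "open U \<longleftrightarrow> (\<forall>x\<in>U. \<forall>\<^sub>F (x', y) in uniformity. x' = x \<longrightarrow> y \<in> U)" for U :: "int set"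
    unfolding eventually_uniformity_metric dist_int_def
    by (auto simp: open_discrete intro!: exI[of _ 1] dest: int_eq_if_dist_lt_1)
qed (auto simp: dist_int_def)

lemma shiftk_in_bcontfun:
  fixes d :: pot
  shows "(\<lambda>n. apply_bcontfun d (n + k)) \<in> bcontfun"
proof -
  have "range (\<lambda>n. apply_bcontfun d (n + k)) \<subseteq> range (apply_bcontfun d)" by auto
  then have "bounded (range (\<lambda>n. apply_bcontfun d (n + k)))"
    using bounded_subset bounded_apply_bcontfun by blast
  moreover have "continuous_on UNIV (\<lambda>n::int. apply_bcontfun d (n + k))"
    by (simp add: continuous_on_def at_discrete)
  ultimately show ?thesis by (simp add: bcontfun_def)
qed

lemma shiftk_apply [simp]: "apply_bcontfun (shiftk k d) n = apply_bcontfun d (n + k)"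
  unfolding shiftk_def by (simp add: Bcontfun_inverse[OF shiftk_in_bcontfun])

lemma shiftk_shiftk [simp]: "shiftk k (shiftk l d) = shiftk (k + l) d"
  by (rule bcontfun_eqI) (simp add: ac_simps)

lemma shiftk_0 [simp]: "shiftk 0 d = d"
  by (rule bcontfun_eqI) simp

lemma dist_shiftk [simp]: "dist (shiftk k x) (shiftk k y) = dist x y"
proof -
  have le: "dist (shiftk k x) (shiftk k y) \<le> dist x y" for k x y
    by (rule dist_bound) (simp add: dist_bounded)
  show ?thesis
    using le[of k x y] le[of "- k" "shiftk k x" "shiftk k y"] by simp
qed

lemma dist_shiftk_orbit: "dist (shiftk k d) (shiftk l d) = dist (shiftk (k - l) d) d"
  using dist_shiftk[of l "shiftk (k - l) d" d] by simp

lemma dist_shiftk_add_le: "dist (shiftk (k + l) d) d \<le> dist (shiftk k d) d + dist (shiftk l d) d"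
  using dist_triangle[of "shiftk (k + l) d" d "shiftk l d"] dist_shiftk_orbit[of "k + l" d l]
  by simp

lemma dist_shiftk_uminus: "dist (shiftk (- k) d) d = dist (shiftk k d) d"
  using dist_shiftk_orbit[of 0 d k] by (simp add: dist_commute)

lemma pot_hull_eq: "pot_hull d = closure (range (\<lambda>k. shiftk k d))"
  by (simp add: pot_hull_def orb_def)

lemma shiftk_in_pot_hull: "shiftk k d \<in> pot_hull d"
  unfolding pot_hull_eq by (rule closure_subset[THEN subsetD]) (rule rangeI)

lemma self_in_pot_hull: "d \<in> pot_hull d"
  using shiftk_in_pot_hull[of 0 d] by simp

lemma continuous_extension_closure_range:
  fixes p :: "'i \<Rightarrow> 'a::metric_space" and f :: "'i \<Rightarrow> 'b::complete_space"
  assumes uc: "\<And>e. e > 0 \<Longrightarrow> \<exists>\<delta>>0. \<forall>i j. dist (p i) (p j) < \<delta> \<longrightarrow> dist (f i) (f j) < e"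
  obtains g where "continuous_on (closure (range p)) g" "\<And>i. g (p i) = f i"
    "g ` closure (range p) \<subseteq> closure (range f)"
proof -
  have f_eq: "f i = f j" if "p i = p j" for i j
  proof (rule dist_eq_0_iff[THEN iffD1], rule ccontr)
    assume "dist (f i) (f j) \<noteq> 0"
    then obtain \<delta> where "\<delta> > 0" "dist (p i) (p j) < \<delta> \<longrightarrow> dist (f i) (f j) < dist (f i) (f j)"
      using uc[of "dist (f i) (f j)"] by auto
    then show False using \<open>p i = p j\<close> by simp
  qed
  define F where "F x = f (SOME i. p i = x)" for x
  have F: "F (p i) = f i" for i
    unfolding F_def by (rule f_eq) (rule someI[of "\<lambda>j. p j = p i"], rule refl)
  have "uniformly_continuous_on (range p) F"
    unfolding uniformly_continuous_on_def
  proof (intro allI impI)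
    fix e :: real assume "e > 0"
    then obtain \<delta> where "\<delta> > 0" and "\<forall>i j. dist (p i) (p j) < \<delta> \<longrightarrow> dist (f i) (f j) < e"
      using uc by blast
    then show "\<exists>\<delta>>0. \<forall>x\<in>range p. \<forall>x'\<in>range p. dist x' x < \<delta> \<longrightarrow> dist (F x') (F x) < e"
      by (auto simp: F)
  qed
  then obtain g where g: "uniformly_continuous_on (closure (range p)) g" "\<And>x. x \<in> range p \<Longrightarrow> F x = g x"
    by (rule uniformly_continuous_on_extension_on_closure) blast
  have cont: "continuous_on (closure (range p)) g"
    using g(1) by (rule uniformly_continuous_imp_continuous)
  have gp: "g (p i) = f i" for i
    using g(2)[of "p i"] F by simp
  have "g ` closure (range p) \<subseteq> closure (g ` range p)"
    by (rule continuous_image_closure_subset[OF cont]) simp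
  also have "g ` range p = range f"
    unfolding image_image gp ..
  finally show ?thesis
    using that[OF cont gp] by simp
qed

lemma continuous_on_closure_eq:
  fixes f g :: "'a::topological_space \<Rightarrow> 'b::metric_space"
  assumes "continuous_on (closure S) f" "continuous_on (closure S) g"
    and "\<And>x. x \<in> S \<Longrightarrow> f x = g x" and "x \<in> closure S"
  shows "f x = g x"
proof -
  have "continuous_on (closure S) (\<lambda>x. dist (f x) (g x))"
    using assms(1,2) by (rule continuous_on_dist)
  then have "dist (f x) (g x) = 0"
    by (rule continuous_constant_on_closure) (simp_all add: assms(3,4))
  then show ?thesis by simp
qed

lemma pot_hull_eq_by_orbit:
  fixes f g :: "pot \<Rightarrow> 'b::metric_space"
  assumes "continuous_on (pot_hull d) f" "continuous_on (pot_hull d) g"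
    and "\<And>k. f (shiftk k d) = g (shiftk k d)" and "x \<in> pot_hull d"
  shows "f x = g x"
  using continuous_on_closure_eq[of "range (\<lambda>k. shiftk k d)" f g x] assms
  by (auto simp: pot_hull_eq)

lemma pot_hull_pair_eq_by_orbit:
  fixes F G :: "pot \<times> pot \<Rightarrow> 'b::metric_space"
  assumes "continuous_on (pot_hull d \<times> pot_hull d) F" "continuous_on (pot_hull d \<times> pot_hull d) G"
    and "\<And>k l. F (shiftk k d, shiftk l d) = G (shiftk k d, shiftk l d)"
    and "x \<in> pot_hull d" "y \<in> pot_hull d"
  shows "F (x, y) = G (x, y)"
  using continuous_on_closure_eq[of "range (\<lambda>k. shiftk k d) \<times> range (\<lambda>k. shiftk k d)" F G "(x, y)"]
    assms by (auto simp: pot_hull_eq closure_Times)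

lemma continuous_on_compose_pair:
  assumes "continuous_on (A \<times> B) (\<lambda>(x, y). m x y)" "continuous_on T a" "continuous_on T b"
    and "a ` T \<subseteq> A" "b ` T \<subseteq> B"
  shows "continuous_on T (\<lambda>t. m (a t) (b t))"
  using continuous_on_compose2[OF assms(1) continuous_on_Pair[OF assms(2,3)]] assms(4,5)
  by auto

lemma orbit_mult_extension:
  obtains m where "continuous_on (pot_hull d \<times> pot_hull d) (\<lambda>(x, y). m x y)"
    and "\<And>x y. x \<in> pot_hull d \<Longrightarrow> y \<in> pot_hull d \<Longrightarrow> m x y \<in> pot_hull d"
    and "\<And>k l. m (shiftk k d) (shiftk l d) = shiftk (k + l) d"
proof -
  define p where "p = (\<lambda>(k::int, l::int). (shiftk k d, shiftk l d))"
  define f where "f = (\<lambda>(k::int, l::int). shiftk (k + l) d)"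
  have "\<exists>\<delta>>0. \<forall>i j. dist (p i) (p j) < \<delta> \<longrightarrow> dist (f i) (f j) < e" if "e > 0" for e
  proof (intro exI conjI allI impI)
    show "e / 2 > 0" using that by simp
    fix i j assume close: "dist (p i) (p j) < e / 2"
    obtain k l k' l' where ij: "i = (k, l)" "j = (k', l')" by fastforce
    have "dist (shiftk k d) (shiftk k' d) < e / 2" "dist (shiftk l d) (shiftk l' d) < e / 2"
      using dist_fst_le[of "p i" "p j"] dist_snd_le[of "p i" "p j"] close by (auto simp: p_def ij)
    moreover have "dist (f i) (f j) \<le> dist (shiftk k d) (shiftk k' d) + dist (shiftk l d) (shiftk l' d)"
      using dist_shiftk_add_le[of "k - k'" "l - l'" d]
      by (simp add: ij f_def dist_shiftk_orbit algebra_simps)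
    ultimately show "dist (f i) (f j) < e" by linarith
  qed
  then obtain g where g: "continuous_on (closure (range p)) g" "\<And>i. g (p i) = f i"
    "g ` closure (range p) \<subseteq> closure (range f)"
    by (rule continuous_extension_closure_range) auto
  have "range p = range (\<lambda>k. shiftk k d) \<times> range (\<lambda>k. shiftk k d)"
    by (auto simp: p_def image_iff)
  then have hull2: "closure (range p) = pot_hull d \<times> pot_hull d"
    by (simp add: closure_Times pot_hull_eq)
  have "closure (range f) \<subseteq> pot_hull d"
    unfolding pot_hull_eq by (rule closure_mono) (auto simp: f_def)
  show ?thesis
  proof (rule that[of "\<lambda>x y. g (x, y)"])
    show "continuous_on (pot_hull d \<times> pot_hull d) (\<lambda>(x, y). g (x, y))"
      using g(1) hull2 by simp
    show "g (x, y) \<in> pot_hull d" if "x \<in> pot_hull d" "y \<in> pot_hull d" for x y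
      using g(3) hull2 that \<open>closure (range f) \<subseteq> pot_hull d\<close> by blast
    show "g (shiftk k d, shiftk l d) = shiftk (k + l) d" for k l
      using g(2)[of "(k, l)"] by (simp add: p_def f_def)
  qed
qed

lemma orbit_inverse_extension:
  obtains i where "continuous_on (pot_hull d) i"
    and "\<And>x. x \<in> pot_hull d \<Longrightarrow> i x \<in> pot_hull d"
    and "\<And>k. i (shiftk k d) = shiftk (- k) d"
proof -
  have "\<exists>\<delta>>0. \<forall>k l. dist (shiftk k d) (shiftk l d) < \<delta> \<longrightarrow> dist (shiftk (- k) d) (shiftk (- l) d) < e"
    if "e > 0" for e
    using that dist_shiftk_uminus[of "k - l" d for k l]
    by (intro exI[of _ e]) (simp add: dist_shiftk_orbit)
  then obtain g where g: "continuous_on (pot_hull d) g" "\<And>k. g (shiftk k d) = shiftk (- k) d"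
    "g ` pot_hull d \<subseteq> closure (range (\<lambda>k. shiftk (- k) d))"
    by (rule continuous_extension_closure_range[where p = "\<lambda>k. shiftk k d" and f = "\<lambda>k. shiftk (- k) d"])
      (auto simp: pot_hull_eq)
  have "closure (range (\<lambda>k. shiftk (- k) d)) \<subseteq> pot_hull d"
    unfolding pot_hull_eq by (rule closure_mono) auto
  then show ?thesis
    using that g by blast
qed

lemma orbit_mult_extension_assoc:
  assumes cont: "continuous_on (pot_hull d \<times> pot_hull d) (\<lambda>(x, y). m x y)"
    and closed: "\<And>x y. x \<in> pot_hull d \<Longrightarrow> y \<in> pot_hull d \<Longrightarrow> m x y \<in> pot_hull d"
    and shiftk: "\<And>k l. m (shiftk k d) (shiftk l d) = shiftk (k + l) d"
    and "x \<in> pot_hull d" "y \<in> pot_hull d" "z \<in> pot_hull d"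
  shows "m (m x y) z = m x (m y z)"
proof -
  let ?H = "pot_hull d" and ?O = "range (\<lambda>k. shiftk k d)"
  let ?L = "\<lambda>t. m (m (fst t) (fst (snd t))) (snd (snd t))"
  let ?R = "\<lambda>t. m (fst t) (m (fst (snd t)) (snd (snd t)))"
  have hull3: "closure (?O \<times> ?O \<times> ?O) = ?H \<times> ?H \<times> ?H"
    by (simp add: closure_Times pot_hull_eq)
  have "continuous_on (?H \<times> ?H \<times> ?H) ?L" "continuous_on (?H \<times> ?H \<times> ?H) ?R"
    by (intro continuous_on_compose_pair[OF cont] continuous_intros; auto intro: closed)+
  moreover have "?L t = ?R t" if "t \<in> ?O \<times> ?O \<times> ?O" for t
    using that by (auto simp: shiftk add.assoc)
  ultimately show ?thesis
    using continuous_on_closure_eq[of "?O \<times> ?O \<times> ?O" ?L ?R "(x, y, z)"] hull3 assms(4-6) by simp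
qed

lemma hull_group_op_exists: "\<exists>m. hull_group_op d m"
proof -
  let ?H = "pot_hull d"
  obtain m where m_cont: "continuous_on (?H \<times> ?H) (\<lambda>(x, y). m x y)"
    and m_closed: "\<And>x y. x \<in> ?H \<Longrightarrow> y \<in> ?H \<Longrightarrow> m x y \<in> ?H"
    and m_shiftk: "\<And>k l. m (shiftk k d) (shiftk l d) = shiftk (k + l) d"
    by (rule orbit_mult_extension[where d = d]) blast
  obtain i where i_cont: "continuous_on ?H i" and i_closed: "\<And>x. x \<in> ?H \<Longrightarrow> i x \<in> ?H"
    and i_shiftk: "\<And>k. i (shiftk k d) = shiftk (- k) d"
    by (rule orbit_inverse_extension[where d = d]) blast
  have m_comp: "continuous_on T (\<lambda>t. m (a t) (b t))"
    if "continuous_on T a" "continuous_on T b" "a ` T \<subseteq> ?H" "b ` T \<subseteq> ?H"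
    for T and a b :: "'t::topological_space \<Rightarrow> pot"
    by (rule continuous_on_compose_pair[OF m_cont that])
  note m_unit = m_shiftk[of 0, simplified] m_shiftk[of _ 0, simplified]
  have unit_left: "m d x = x" if "x \<in> ?H" for x
    by (rule pot_hull_eq_by_orbit[where f = "\<lambda>x. m d x" and g = "\<lambda>x. x"])
      (use that self_in_pot_hull in \<open>auto intro!: m_comp continuous_intros simp: m_unit\<close>)
  have unit_right: "m x d = x" if "x \<in> ?H" for x
    by (rule pot_hull_eq_by_orbit[where f = "\<lambda>x. m x d" and g = "\<lambda>x. x"])
      (use that self_in_pot_hull in \<open>auto intro!: m_comp continuous_intros simp: m_unit\<close>)
  have inverse_right: "m x (i x) = d" if "x \<in> ?H" for x
    by (rule pot_hull_eq_by_orbit[where f = "\<lambda>x. m x (i x)" and g = "\<lambda>_. d"])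
      (use that i_closed in \<open>auto intro!: m_comp continuous_intros i_cont simp: m_shiftk i_shiftk\<close>)
  have inverse_left: "m (i x) x = d" if "x \<in> ?H" for x
    by (rule pot_hull_eq_by_orbit[where f = "\<lambda>x. m (i x) x" and g = "\<lambda>_. d"])
      (use that i_closed in \<open>auto intro!: m_comp continuous_intros i_cont simp: m_shiftk i_shiftk\<close>)
  have "hull_group_op d m"
    unfolding hull_group_op_def
    by (intro conjI ballI allI exI[of _ i];
        simp add: m_closed orbit_mult_extension_assoc[OF m_cont m_closed m_shiftk]
          unit_left unit_right i_closed inverse_right inverse_left i_cont m_cont m_shiftk)
  then show ?thesis by blast
qed

lemma hull_mult_group_op: "hull_group_op d (hull_mult d)"
  unfolding hull_mult_def using hull_group_op_exists by (rule someI_ex)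

lemma hull_mult_closed: "x \<in> pot_hull d \<Longrightarrow> y \<in> pot_hull d \<Longrightarrow> hull_mult d x y \<in> pot_hull d"
  using hull_mult_group_op unfolding hull_group_op_def by blast

lemma hull_mult_shiftk [simp]: "hull_mult d (shiftk k d) (shiftk l d) = shiftk (k + l) d"
  using hull_mult_group_op unfolding hull_group_op_def by blast

lemma continuous_on_hull_mult:
  "continuous_on (pot_hull d \<times> pot_hull d) (\<lambda>(x, y). hull_mult d x y)"
  using hull_mult_group_op unfolding hull_group_op_def by blast

lemma continuous_on_hull_mult_comp:
  assumes "continuous_on (pot_hull d) f"
  shows "continuous_on (pot_hull d \<times> pot_hull d) (\<lambda>t. f (hull_mult d (fst t) (snd t)))"
  using continuous_on_compose2[OF assms continuous_on_hull_mult] hull_mult_closed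
  by (force simp: split_def)

lemma cis_2pi_div_eq_1_iff:
  assumes "N > 0"
  shows "cis (2 * pi * of_int k / real N) = 1 \<longleftrightarrow> int N dvd k"
proof -
  have "2 * pi * of_int k / real N = of_int n * (2 * pi) \<longleftrightarrow> k = n * int N" for n
  proof -
    have "2 * pi * of_int k / real N = of_int n * (2 * pi) \<longleftrightarrow> real_of_int k = of_int n * real N"
      using assms pi_gt_zero by (auto simp: field_simps)
    also have "\<dots> \<longleftrightarrow> k = n * int N"
      by (metis of_int_eq_iff of_int_mult of_int_of_nat_eq)
    finally show ?thesis .
  qed
  then show ?thesis
    by (auto simp: cis_eq_1_iff dvd_def mult.commute)
qed

lemma cis_2pi_div_eq_iff:
  assumes "N > 0"
  shows "cis (2 * pi * of_int i / real N) = cis (2 * pi * of_int j / real N) \<longleftrightarrow> int N dvd (i - j)"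
proof -
  have "cis (2 * pi * of_int i / real N) = cis (2 * pi * of_int j / real N) \<longleftrightarrow>
      cis (2 * pi * of_int i / real N) / cis (2 * pi * of_int j / real N) = 1"
    by (simp add: cis_neq_zero)
  also have "\<dots> \<longleftrightarrow> cis (2 * pi * of_int (i - j) / real N) = 1"
    by (simp add: cis_divide diff_divide_distrib right_diff_distrib)
  finally show ?thesis
    using cis_2pi_div_eq_1_iff[OF assms, of "i - j"] by simp
qed

lemma freq_module_inverse_dvd:
  assumes "N > 0" and "2 * pi / real N \<in> freq_module d"
  shows "\<exists>\<delta>>0. \<forall>k. dist (shiftk k d) d < \<delta> \<longrightarrow> int N dvd k"
proof -
  define \<zeta> where "\<zeta> k = cis (2 * pi * of_int k / real N)" for k :: int
  obtain chr where cont: "continuous_on (pot_hull d) chr"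
    and chr_cis: "\<And>k. chr (shiftk k d) = cis (of_int k * (2 * pi / real N))"
    using assms(2) unfolding freq_module_def by blast
  have chr: "chr (shiftk k d) = \<zeta> k" for k
    by (simp add: chr_cis \<zeta>_def algebra_simps)
  have \<zeta>_mod: "\<zeta> k = \<zeta> (k mod int N)" for k
    unfolding \<zeta>_def cis_2pi_div_eq_iff[OF assms(1)] by (simp add: minus_mod_eq_mult_div)
  have "\<zeta> k \<in> \<zeta> ` {0..<int N}" for k
    by (intro image_eqI[where f = \<zeta> and x = "k mod int N"] \<zeta>_mod) (use assms(1) in simp)
  then have "range \<zeta> \<subseteq> \<zeta> ` {0..<int N}"
    by blast
  then have "finite (range \<zeta>)"
    by (rule finite_subset) simp
  \<comment> \<open>The character takes only the \<open>N\<close> values \<open>\<zeta> k\<close>, among which \<open>1 = chr d\<close> is isolated.\<close>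
  then obtain c where "c > 0" and c: "\<forall>z\<in>range \<zeta>. z \<noteq> 1 \<longrightarrow> c \<le> dist 1 z"
    using finite_set_avoid[of "range \<zeta>" 1] by blast
  have "chr d = 1"
    using chr[of 0] by (simp add: \<zeta>_def)
  moreover have "\<exists>\<delta>>0. \<forall>x\<in>pot_hull d. dist x d < \<delta> \<longrightarrow> dist (chr x) (chr d) < c"
    using cont self_in_pot_hull \<open>c > 0\<close> unfolding continuous_on_iff by blast
  ultimately obtain \<delta> where "\<delta> > 0" and \<delta>: "\<And>x. x \<in> pot_hull d \<Longrightarrow> dist x d < \<delta> \<Longrightarrow> dist (chr x) 1 < c"
    by auto
  have "int N dvd k" if "dist (shiftk k d) d < \<delta>" for k
  proof -
    have "dist 1 (\<zeta> k) < c"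
      using \<delta>[OF shiftk_in_pot_hull that] by (simp add: chr dist_commute)
    then have "\<zeta> k = 1"
      using c by (meson not_le rangeI)
    then show "int N dvd k"
      by (simp add: \<zeta>_def cis_2pi_div_eq_1_iff[OF assms(1)])
  qed
  then show ?thesis
    using \<open>\<delta> > 0\<close> by blast
qed

lemma inverse_in_freq_module:
  assumes "N > 0" and "\<delta> > 0" and "\<And>k. dist (shiftk k d) d < \<delta> \<Longrightarrow> int N dvd k"
  shows "2 * pi / real N \<in> freq_module d"
proof -
  define \<zeta> where "\<zeta> k = cis (2 * pi * of_int k / real N)" for k :: int
  have "\<zeta> k = \<zeta> l" if "dist (shiftk k d) (shiftk l d) < \<delta>" for k l
    using assms(3)[of "k - l"] that
    by (simp add: dist_shiftk_orbit \<zeta>_def cis_2pi_div_eq_iff[OF assms(1)])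
  then have "\<exists>\<delta>>0. \<forall>k l. dist (shiftk k d) (shiftk l d) < \<delta> \<longrightarrow> dist (\<zeta> k) (\<zeta> l) < e"
    if "e > 0" for e
    using assms(2) that by (intro exI[of _ \<delta>]) simp
  then obtain chr where cont: "continuous_on (pot_hull d) chr" and chr: "\<And>k. chr (shiftk k d) = \<zeta> k"
    by (rule continuous_extension_closure_range[where p = "\<lambda>k. shiftk k d" and f = \<zeta>])
      (auto simp: pot_hull_eq)
  have \<zeta>_add: "\<zeta> (k + l) = \<zeta> k * \<zeta> l" for k l
    by (simp add: \<zeta>_def cis_mult add_divide_distrib distrib_left)
  have "norm (chr x) = 1" if "x \<in> pot_hull d" for x
  proof (rule pot_hull_eq_by_orbit[where d = d and f = "\<lambda>x. norm (chr x)" and g = "\<lambda>_. 1"])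
    show "continuous_on (pot_hull d) (\<lambda>x. norm (chr x))"
      using cont by (rule continuous_on_norm)
    show "norm (chr (shiftk k d)) = 1" for k
      by (simp add: chr \<zeta>_def)
  qed (simp_all add: that)
  moreover have "chr (hull_mult d x y) = chr x * chr y" if "x \<in> pot_hull d" "y \<in> pot_hull d" for x y
  proof (rule pot_hull_pair_eq_by_orbit[where d = d and F = "\<lambda>t. chr (hull_mult d (fst t) (snd t))"
        and G = "\<lambda>t. chr (fst t) * chr (snd t)", simplified])
    show "continuous_on (pot_hull d \<times> pot_hull d) (\<lambda>t. chr (hull_mult d (fst t) (snd t)))"
      using cont by (rule continuous_on_hull_mult_comp)
    show "continuous_on (pot_hull d \<times> pot_hull d) (\<lambda>t. chr (fst t) * chr (snd t))"
      by (intro continuous_on_mult continuous_on_compose2[OF cont] continuous_intros) auto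
  qed (simp_all add: that chr \<zeta>_add)
  ultimately show ?thesis
    unfolding freq_module_def using cont
    by (intro CollectI exI[of _ chr]) (simp add: chr \<zeta>_def mult.commute)
qed

lemma int_subgroup_eq_multiples:
  fixes G :: "int set"
  assumes add: "\<And>a b. a \<in> G \<Longrightarrow> b \<in> G \<Longrightarrow> a + b \<in> G"
    and uminus: "\<And>a. a \<in> G \<Longrightarrow> - a \<in> G"
    and "q \<in> G" "q \<noteq> 0"
  shows "\<exists>m>0. \<forall>k. k \<in> G \<longleftrightarrow> m dvd k"
proof -
  define g where "g = Gcd G"
  have "0 \<in> G"
    using add[OF \<open>q \<in> G\<close> uminus[OF \<open>q \<in> G\<close>]] by simp
  have "s \<in> G" if "s \<in> group_closure G" for s
    using that
  proof induction
    case (diff s t)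
    then show ?case
      using add[OF _ uminus] by simp
  qed (use \<open>0 \<in> G\<close> in auto)
  then have G: "G = range (times g)"
    unfolding g_def using group_closure_eq[of G] group_closure.base[of _ G] by blast
  have "g \<noteq> 0"
    unfolding g_def using \<open>q \<in> G\<close> \<open>q \<noteq> 0\<close> by auto
  then have "g > 0"
    using Gcd_int_greater_eq_0[of G] unfolding g_def by linarith
  moreover have "k \<in> G \<longleftrightarrow> g dvd k" for k
    by (auto simp: G dvd_def)
  ultimately show ?thesis
    by blast
qed

lemma periodic_pot_period:
  assumes "periodic_pot p"
  obtains q :: int where "q > 0" and "\<And>k. q dvd k \<Longrightarrow> shiftk k p = p"
proof -
  let ?G = "{k. shiftk k p = p}"
  have "finite (range (\<lambda>k. shiftk k p))"
    using assms by (simp add: periodic_pot_def orb_def)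
  then have "\<not> inj (\<lambda>k. shiftk k p)"
    using finite_imageD infinite_UNIV_int by blast
  then obtain a b where "a \<noteq> b" "shiftk a p = shiftk b p"
    unfolding inj_def by blast
  then have "shiftk (- b) (shiftk a p) = p"
    by simp
  then have "a - b \<in> ?G"
    by (simp add: algebra_simps)
  have "k + l \<in> ?G" if "k \<in> ?G" "l \<in> ?G" for k l
    using that shiftk_shiftk[of k l p] by simp
  moreover have "- k \<in> ?G" if "k \<in> ?G" for k
    using that shiftk_shiftk[of "- k" k p] by simp
  ultimately have "\<exists>q>0. \<forall>k. k \<in> ?G \<longleftrightarrow> q dvd k"
    by (rule int_subgroup_eq_multiples[of ?G "a - b"]) (use \<open>a - b \<in> ?G\<close> \<open>a \<noteq> b\<close> in auto)
  then show ?thesis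
    using that by auto
qed

text \<open>
  The residues \<open>k\<close> for which \<open>d\<close> is a limit of the coset \<open>\<sigma>\<^sup>k\<^sup>+\<^sup>q\<^sup>\<int> d\<close>. They form a subgroup
  \<open>m\<int> \<supseteq> q\<int>\<close> containing every shift that moves \<open>d\<close> little enough, and when \<open>q\<close> is a period of a
  periodic potential near \<open>d\<close> no shift in it moves \<open>d\<close> much.
\<close>

definition return_residues :: "pot \<Rightarrow> int \<Rightarrow> int set" where
  "return_residues d q = {k. \<forall>\<eta>>0. \<exists>j. dist (shiftk (k + q * j) d) d < \<eta>}"

lemma return_residues_multiple: "q * i \<in> return_residues d q"
  unfolding return_residues_def by (auto intro: exI[of _ "- i"])

lemma return_residues_add:
  assumes "a \<in> return_residues d q" "b \<in> return_residues d q"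
  shows "a + b \<in> return_residues d q"
  unfolding return_residues_def
proof (intro CollectI allI impI)
  fix \<eta> :: real assume "\<eta> > 0"
  then have "\<eta> / 2 > 0"
    by simp
  then obtain i j where "dist (shiftk (a + q * i) d) d < \<eta> / 2" "dist (shiftk (b + q * j) d) d < \<eta> / 2"
    using assms unfolding return_residues_def by blast
  then have "dist (shiftk ((a + q * i) + (b + q * j)) d) d < \<eta>"
    using dist_shiftk_add_le[of "a + q * i" "b + q * j" d] by linarith
  then show "\<exists>j. dist (shiftk (a + b + q * j) d) d < \<eta>"
    by (intro exI[of _ "i + j"]) (simp add: algebra_simps)
qed

lemma return_residues_uminus:
  assumes "a \<in> return_residues d q"
  shows "- a \<in> return_residues d q"
  unfolding return_residues_def
proof (intro CollectI allI impI)
  fix \<eta> :: real assume "\<eta> > 0"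
  then obtain j where "dist (shiftk (a + q * j) d) d < \<eta>"
    using assms unfolding return_residues_def by blast
  then show "\<exists>j. dist (shiftk (- a + q * j) d) d < \<eta>"
    using dist_shiftk_uminus[of "a + q * j" d] by (intro exI[of _ "- j"]) simp
qed

lemma return_residues_neighbourhood:
  assumes "q > 0"
  obtains \<delta> where "\<delta> > 0" and "\<And>k. dist (shiftk k d) d < \<delta> \<Longrightarrow> k \<in> return_residues d q"
proof -
  let ?R = "return_residues d q"
  have "\<exists>\<eta>>0. \<forall>j. \<eta> \<le> dist (shiftk (r + q * j) d) d" if "r \<notin> ?R" for r
    using that by (auto simp: return_residues_def not_less)
  then obtain \<eta> where \<eta>: "\<And>r. r \<notin> ?R \<Longrightarrow> \<eta> r > 0 \<and> (\<forall>j. \<eta> r \<le> dist (shiftk (r + q * j) d) d)"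
    by metis
  define \<delta> where "\<delta> = Min (insert 1 (\<eta> ` ({0..<q} - ?R)))"
  have "\<delta> > 0"
    unfolding \<delta>_def using \<eta> by (subst Min_gr_iff) auto
  have \<delta>_le: "\<delta> \<le> \<eta> r" if "r \<in> {0..<q} - ?R" for r
    unfolding \<delta>_def using that by (intro Min_le) auto
  have "k \<in> ?R" if "dist (shiftk k d) d < \<delta>" for k
  proof -
    define r where "r = k mod q"
    have k: "k = r + q * (k div q)"
      by (simp add: r_def)
    have "r \<in> {0..<q}"
      using assms by (simp add: r_def)
    moreover have "\<not> \<eta> r \<le> dist (shiftk (r + q * (k div q)) d) d" if "r \<notin> ?R"
      using \<delta>_le[of r] that \<open>r \<in> {0..<q}\<close> \<open>dist (shiftk k d) d < \<delta>\<close> k by auto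
    ultimately have "r \<in> ?R"
      using \<eta> by blast
    then show "k \<in> ?R"
      using return_residues_add[OF _ return_residues_multiple] k by metis
  qed
  then show ?thesis
    using that \<open>\<delta> > 0\<close> by blast
qed

lemma return_residues_dist_le:
  assumes "\<And>j. dist (shiftk (q * j) d) d \<le> e" and "k \<in> return_residues d q"
  shows "dist (shiftk k d) d \<le> e"
proof (rule field_le_epsilon)
  fix \<eta> :: real assume "\<eta> > 0"
  then obtain j where j: "dist (shiftk (k + q * j) d) d < \<eta>"
    using assms(2) unfolding return_residues_def by blast
  have "dist (shiftk k d) d \<le> dist (shiftk k d) (shiftk (k + q * j) d) + dist (shiftk (k + q * j) d) d"
    by (rule dist_triangle)
  also have "dist (shiftk k d) (shiftk (k + q * j) d) = dist (shiftk (q * - j) d) d"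
    by (simp add: dist_shiftk_orbit)
  finally show "dist (shiftk k d) d \<le> e + \<eta>"
    using assms(1)[of "- j"] j by linarith
qed

lemma limit_periodic_shift_control:
  assumes "limit_periodic d" and "e > 0"
  shows "\<exists>m::nat. \<exists>\<delta>. m > 0 \<and> \<delta> > 0 \<and> (\<forall>k. dist (shiftk k d) d < \<delta> \<longrightarrow> int m dvd k)
    \<and> (\<forall>k. int m dvd k \<longrightarrow> dist (shiftk k d) d \<le> e)"
proof -
  have "e / 2 > 0"
    using assms(2) by simp
  then obtain p where "periodic_pot p" and "dist p d < e / 2"
    using assms(1) unfolding limit_periodic_def closure_approachable by blast
  obtain q where "q > 0" and period: "\<And>k. q dvd k \<Longrightarrow> shiftk k p = p"
    using \<open>periodic_pot p\<close> by (rule periodic_pot_period) auto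
  have "dist (shiftk (q * j) d) d \<le> e" for j
  proof -
    have "dist (shiftk (q * j) d) d \<le> dist (shiftk (q * j) d) (shiftk (q * j) p) + dist (shiftk (q * j) p) d"
      by (rule dist_triangle)
    also have "dist (shiftk (q * j) d) (shiftk (q * j) p) = dist d p"
      by (rule dist_shiftk)
    also have "shiftk (q * j) p = p"
      by (rule period) simp
    also have "dist d p + dist p d < e"
      using \<open>dist p d < e / 2\<close> by (simp add: dist_commute)
    finally show ?thesis
      by simp
  qed
  then have close: "dist (shiftk k d) d \<le> e" if "k \<in> return_residues d q" for k
    using that by (rule return_residues_dist_le)
  have "\<exists>m>0. \<forall>k. k \<in> return_residues d q \<longleftrightarrow> m dvd k"
    using return_residues_add return_residues_uminus return_residues_multiple[of q 1 d] \<open>q > 0\<close>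
    by (intro int_subgroup_eq_multiples[of _ q]) auto
  then obtain m where "m > 0" and m: "\<And>k. k \<in> return_residues d q \<longleftrightarrow> m dvd k"
    by blast
  obtain \<delta> where "\<delta> > 0" and "\<And>k. dist (shiftk k d) d < \<delta> \<Longrightarrow> k \<in> return_residues d q"
    using return_residues_neighbourhood \<open>q > 0\<close> by blast
  then show ?thesis
    using \<open>m > 0\<close> m close by (intro exI[of _ "nat m"] exI[of _ \<delta>]) auto
qed

lemma int_span_inverse_dvd:
  fixes n :: "nat \<Rightarrow> nat"
  assumes pos: "\<And>j. 0 < n j" and chain: "\<And>j. n j dvd n (Suc j)" and "m > 0"
    and "2 * pi / real m \<in> int_span ((\<lambda>N. 2 * pi / real N) ` range n)"
  shows "\<exists>j. m dvd n j"
proof -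
  obtain F c where "finite F" and F: "F \<subseteq> (\<lambda>N. 2 * pi / real N) ` range n"
    and sum: "2 * pi / real m = (\<Sum>a\<in>F. of_int (c a) * a)"
    using assms(4) unfolding int_span_def by blast
  have "\<forall>a\<in>F. \<exists>i. a = 2 * pi / real (n i)"
    using F by blast
  then obtain idx where idx: "\<And>a. a \<in> F \<Longrightarrow> a = 2 * pi / real (n (idx a))"
    by metis
  define J where "J = Max (insert 0 (idx ` F))"
  have "\<exists>t::int. a * real (n J) = 2 * pi * of_int t" if "a \<in> F" for a
  proof -
    have "idx a \<le> J"
      unfolding J_def using \<open>finite F\<close> that by (intro Max_ge) auto
    then have "n (idx a) dvd n J"
      by (rule transitive_stepwise_le) (auto intro: chain dvd_trans)
    then obtain u where "n J = n (idx a) * u"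
      by (rule dvdE)
    then have "a * real (n J) = 2 * pi * of_int (int u)"
      using idx[OF that] pos[of "idx a"] by (simp add: field_simps)
    then show ?thesis
      by blast
  qed
  then obtain t where t: "\<And>a. a \<in> F \<Longrightarrow> a * real (n J) = 2 * pi * of_int (t a)"
    by metis
  define C where "C = (\<Sum>a\<in>F. c a * t a)"
  have "2 * pi / real m * real (n J) = (\<Sum>a\<in>F. of_int (c a) * a * real (n J))"
    by (simp add: sum sum_distrib_right)
  also have "\<dots> = (\<Sum>a\<in>F. 2 * pi * (of_int (c a) * of_int (t a)))"
    by (rule sum.cong) (simp_all add: mult.assoc t)
  also have "\<dots> = 2 * pi * of_int C"
    by (simp add: C_def sum_distrib_left)
  finally have "2 * pi * (real (n J) / real m) = 2 * pi * of_int C"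
    by simp
  then have "real (n J) / real m = of_int C"
    by (rule mult_left_cancel[THEN iffD1, rotated]) simp
  then have "real (n J) = real m * of_int C"
    using \<open>m > 0\<close> by (simp add: field_simps)
  then have "int (n J) = int m * C"
    by (metis of_int_eq_iff of_int_mult of_int_of_nat_eq)
  then have "int m dvd int (n J)"
    by (rule dvdI)
  then show ?thesis
    by auto
qed

lemma freq_integer_set_member:
  assumes "freq_integer_set d S" and "N \<in> S"
  shows "N > 0" and "2 * pi / real N \<in> freq_module d"
proof -
  show "N > 0"
    using assms unfolding freq_integer_set_def by auto
  have "2 * pi / real N \<in> (\<lambda>N. 2 * pi / real N) ` S"
    using assms(2) by (rule imageI)
  then show "2 * pi / real N \<in> freq_module d"
    using assms(1) unfolding freq_integer_set_def int_span_def
    by (auto intro!: exI[of _ "{2 * pi / real N}"] exI[of _ "\<lambda>_. 1"])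
qed

lemma freq_integer_set_dvd_member:
  assumes "freq_integer_set d S" and "m > 0" and "2 * pi / real m \<in> freq_module d"
  shows "\<exists>N\<in>S. m dvd N"
proof -
  obtain n where "S = range n" "\<And>j. 0 < n j" "\<And>j. n j dvd n (Suc j)"
    and "freq_module d = int_span ((\<lambda>N. 2 * pi / real N) ` S)"
    using assms(1) unfolding freq_integer_set_def by blast
  then show ?thesis
    using int_span_inverse_dvd[of n m] assms(2,3) by auto
qed

lemma freq_integer_set_cofinal:
  assumes "freq_integer_set d S" and "T \<subseteq> S" and "infinite T" and "N \<in> S"
  shows "\<exists>M\<in>T. N dvd M"
proof -
  obtain n where S: "S = range n" and chain: "\<And>j. n j dvd n (Suc j)"
    using assms(1) unfolding freq_integer_set_def by blast
  obtain i where "N = n i"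
    using assms(4) S by blast
  have "\<not> T \<subseteq> n ` {..<i}"
    using assms(3) finite_subset by blast
  then obtain j where "n j \<in> T" "i \<le> j"
    using assms(2) S by (force simp: not_less)
  moreover have "n i dvd n j"
    using \<open>i \<le> j\<close> by (rule transitive_stepwise_le) (auto intro: chain dvd_trans)
  ultimately show ?thesis
    using \<open>N = n i\<close> by blast
qed

definition shift_controls :: "pot \<Rightarrow> pot \<Rightarrow> bool" where
  "shift_controls d e \<longleftrightarrow>
     (\<forall>\<epsilon>>0. \<exists>\<delta>>0. \<forall>k. dist (shiftk k d) d < \<delta> \<longrightarrow> dist (shiftk k e) e < \<epsilon>)"

lemma shift_controls_if_frequencies:
  assumes "limit_periodic e"
    and "\<And>m. m > 0 \<Longrightarrow> 2 * pi / real m \<in> freq_module e \<Longrightarrow>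
      \<exists>N>0. m dvd N \<and> 2 * pi / real N \<in> freq_module d"
  shows "shift_controls d e"
  unfolding shift_controls_def
proof (intro allI impI)
  fix \<epsilon> :: real assume "\<epsilon> > 0"
  then have "\<epsilon> / 2 > 0"
    by simp
  then obtain m :: nat and \<delta>' where "m > 0" "\<delta>' > 0"
    and "\<forall>k. dist (shiftk k e) e < \<delta>' \<longrightarrow> int m dvd k"
    and close: "\<forall>k. int m dvd k \<longrightarrow> dist (shiftk k e) e \<le> \<epsilon> / 2"
    using limit_periodic_shift_control[OF assms(1)] by blast
  then have "2 * pi / real m \<in> freq_module e"
    by (intro inverse_in_freq_module) auto
  then obtain N where "N > 0" "m dvd N" "2 * pi / real N \<in> freq_module d"
    using assms(2) \<open>m > 0\<close> by blast
  then obtain \<delta> where "\<delta> > 0" and "\<forall>k. dist (shiftk k d) d < \<delta> \<longrightarrow> int N dvd k"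
    using freq_module_inverse_dvd by blast
  have "dist (shiftk k e) e < \<epsilon>" if "dist (shiftk k d) d < \<delta>" for k
  proof -
    have "int N dvd k"
      using \<open>\<forall>k. dist (shiftk k d) d < \<delta> \<longrightarrow> int N dvd k\<close> that by blast
    then have "int m dvd k"
      using \<open>m dvd N\<close> by (meson dvd_trans int_dvd_int_iff)
    then have "dist (shiftk k e) e \<le> \<epsilon> / 2"
      using close by blast
    then show ?thesis
      using \<open>\<epsilon> > 0\<close> by linarith
  qed
  then show "\<exists>\<delta>>0. \<forall>k. dist (shiftk k d) d < \<delta> \<longrightarrow> dist (shiftk k e) e < \<epsilon>"
    using \<open>\<delta> > 0\<close> by blast
qed

lemma shift_controls_extension:
  assumes "shift_controls d e"
  obtains \<phi> where "continuous_on (pot_hull d) \<phi>" and "\<phi> ` pot_hull d \<subseteq> pot_hull e"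
    and "\<And>k. \<phi> (shiftk k d) = shiftk k e"
proof -
  have "\<exists>\<delta>>0. \<forall>k l. dist (shiftk k d) (shiftk l d) < \<delta> \<longrightarrow> dist (shiftk k e) (shiftk l e) < \<epsilon>"
    if "\<epsilon> > 0" for \<epsilon>
  proof -
    obtain \<delta> where "\<delta> > 0" "\<forall>k. dist (shiftk k d) d < \<delta> \<longrightarrow> dist (shiftk k e) e < \<epsilon>"
      using assms \<open>\<epsilon> > 0\<close> unfolding shift_controls_def by blast
    then show ?thesis
      by (intro exI[of _ \<delta>]) (simp add: dist_shiftk_orbit)
  qed
  then obtain \<phi> where "continuous_on (closure (range (\<lambda>k. shiftk k d))) \<phi>"
    "\<And>k. \<phi> (shiftk k d) = shiftk k e"
    "\<phi> ` closure (range (\<lambda>k. shiftk k d)) \<subseteq> closure (range (\<lambda>k. shiftk k e))"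
    by (rule continuous_extension_closure_range) auto
  then show ?thesis
    using that unfolding pot_hull_eq by blast
qed

lemma hull_mult_hom_if_orbit_hom:
  assumes "continuous_on (pot_hull d) \<phi>" and "\<phi> ` pot_hull d \<subseteq> pot_hull e"
    and "\<And>k. \<phi> (shiftk k d) = shiftk k e"
    and "x \<in> pot_hull d" and "y \<in> pot_hull d"
  shows "\<phi> (hull_mult d x y) = hull_mult e (\<phi> x) (\<phi> y)"
proof (rule pot_hull_pair_eq_by_orbit[where d = d and F = "\<lambda>t. \<phi> (hull_mult d (fst t) (snd t))"
      and G = "\<lambda>t. hull_mult e (\<phi> (fst t)) (\<phi> (snd t))", simplified])
  show "continuous_on (pot_hull d \<times> pot_hull d) (\<lambda>t. \<phi> (hull_mult d (fst t) (snd t)))"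
    using assms(1) by (rule continuous_on_hull_mult_comp)
  show "continuous_on (pot_hull d \<times> pot_hull d) (\<lambda>t. hull_mult e (\<phi> (fst t)) (\<phi> (snd t)))"
    by (rule continuous_on_compose_pair[OF continuous_on_hull_mult])
      (use assms(2) in \<open>auto intro!: continuous_on_compose2[OF assms(1)] continuous_intros\<close>)
qed (simp_all add: assms(3-5))

lemma hulls_isomorphic_if_shift_controls:
  assumes "shift_controls d e" and "shift_controls e d"
  shows "hulls_isomorphic d e"
proof -
  obtain \<phi> where \<phi>: "continuous_on (pot_hull d) \<phi>" "\<phi> ` pot_hull d \<subseteq> pot_hull e"
    "\<And>k. \<phi> (shiftk k d) = shiftk k e"
    using assms(1) by (rule shift_controls_extension) auto
  obtain \<psi> where \<psi>: "continuous_on (pot_hull e) \<psi>" "\<psi> ` pot_hull e \<subseteq> pot_hull d"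
    "\<And>k. \<psi> (shiftk k e) = shiftk k d"
    using assms(2) by (rule shift_controls_extension) auto
  have "\<psi> (\<phi> x) = x" if "x \<in> pot_hull d" for x
    by (rule pot_hull_eq_by_orbit[where f = "\<lambda>x. \<psi> (\<phi> x)" and g = "\<lambda>x. x"])
      (use that \<phi> \<psi> in \<open>auto intro: continuous_on_compose2[OF \<psi>(1) \<phi>(1)]\<close>)
  moreover have "\<phi> (\<psi> y) = y" if "y \<in> pot_hull e" for y
    by (rule pot_hull_eq_by_orbit[where f = "\<lambda>y. \<phi> (\<psi> y)" and g = "\<lambda>y. y"])
      (use that \<phi> \<psi> in \<open>auto intro: continuous_on_compose2[OF \<phi>(1) \<psi>(1)]\<close>)
  ultimately have "homeomorphism (pot_hull d) (pot_hull e) \<phi> \<psi>"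
    using \<phi>(1,2) \<psi>(1,2) by (intro homeomorphismI) auto
  then show ?thesis
    unfolding hulls_isomorphic_def using hull_mult_hom_if_orbit_hom[OF \<phi>] by blast
qed

theorem theorem2p9:
  fixes d dt :: pot and S St :: "nat set"
  assumes "limit_periodic d" and "freq_integer_set d S" and "infinite S"
    and "limit_periodic dt" and "freq_integer_set dt St"
    and "St \<subseteq> S" and "infinite St"
  shows "hulls_isomorphic d dt"
proof (rule hulls_isomorphic_if_shift_controls)
  show "shift_controls d dt"
  proof (rule shift_controls_if_frequencies[OF assms(4)])
    fix m :: nat assume "m > 0" and "2 * pi / real m \<in> freq_module dt"
    then obtain N where "N \<in> St" "m dvd N"
      using freq_integer_set_dvd_member[OF assms(5)] by blast
    then show "\<exists>N>0. m dvd N \<and> 2 * pi / real N \<in> freq_module d"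
      using freq_integer_set_member[OF assms(2)] assms(6) by blast
  qed
  show "shift_controls dt d"
  proof (rule shift_controls_if_frequencies[OF assms(1)])
    fix m :: nat assume "m > 0" and "2 * pi / real m \<in> freq_module d"
    then obtain N where "N \<in> S" "m dvd N"
      using freq_integer_set_dvd_member[OF assms(2)] by blast
    then obtain M where "M \<in> St" "N dvd M"
      using freq_integer_set_cofinal[OF assms(2,6,7)] by blast
    then show "\<exists>M>0. m dvd M \<and> 2 * pi / real M \<in> freq_module dt"
      using freq_integer_set_member[OF assms(5)] \<open>m dvd N\<close> dvd_trans by blast
  qed
qed

end
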